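(* Let $G$ be a torsion-free locally compact abelian group and let $H$ be an open pure subgroup of $G$. Then $G_{op}=H_{op}$.
   Context: A subgroup $H$ of an abelian group $G$ is pure if $nH=H\cap nG$ for every positive integer $n$. For an LCA group $G$, $G_{op}$ denotes the intersection of all open pure subgroups of $G$; $H$ is regarded as an LCA group with the subspace topology. *)

theory Defs
  imports "HOL-Analysis.Analysis"
begin

text \<open>Abelian groups are modelled as a type of class ab_group_add with a topology;
  subgroups of the ambient group are subsets of the type.\<close>

definition nmul :: "nat \<Rightarrow> 'a::ab_group_add \<Rightarrow> 'a" where
  "nmul n x = (\<Sum>i<n. x)"

definition add_subgroup :: "'a::ab_group_add set \<Rightarrow> 'a set \<Rightarrow> bool" where
  "add_subgroup G H \<longleftrightarrow> H \<subseteq> G \<and> 0 \<in> H \<and> (\<forall>x\<in>H. \<forall>y\<in>H. x + y \<in> H) \<and> (\<forall>x\<in>H. - x \<in> H)"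

definition pure_subgroup :: "'a::ab_group_add set \<Rightarrow> 'a set \<Rightarrow> bool" where
  "pure_subgroup G H \<longleftrightarrow> add_subgroup G H \<and>
     (\<forall>n>0. nmul n ` H = H \<inter> nmul n ` G)"

text \<open>G_op: intersection of all open pure subgroups of G, where G carries the
  subspace topology.\<close>
definition op_part :: "'a::{ab_group_add, topological_space} set \<Rightarrow> 'a set" where
  "op_part G = \<Inter> {H. pure_subgroup G H \<and> openin (top_of_set G) H}"

definition torsion_free :: "'a::ab_group_add set \<Rightarrow> bool" where
  "torsion_free G \<longleftrightarrow> (\<forall>x\<in>G. \<forall>n>0. nmul n x = 0 \<longrightarrow> x = 0)"

definition LCA_type :: "'a::{ab_group_add, t2_space} itself \<Rightarrow> bool" where
  "LCA_type _ \<longleftrightarrow> continuous_on UNIV (\<lambda>p::'a \<times> 'a. fst p + snd p)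
      \<and> continuous_on UNIV (\<lambda>x::'a. - x)
      \<and> locally_compact_space (euclidean :: 'a topology)"

end

theory Submission
  imports Defs
begin

text \<open>Purity and openness are both transitive, so every open pure subgroup of H is one of G.
  Conversely, if K is open and pure in G then K \<inter> H is open and pure in H: in a torsion-free
  group n-th roots are unique, hence an element of K \<inter> H that is an n-th multiple in G has its
  n-th roots in K and in H equal. Thus op_part H \<subseteq> K \<inter> H \<subseteq> K for every such K.
  Neither local compactness nor continuity of the group operations plays a role.\<close>

lemma nmul_diff: "nmul n (a - b) = nmul n a - nmul n (b::'a::ab_group_add)"
  unfolding nmul_def by (simp add: sum_subtractf)

lemma add_subgroup_diff:
  "add_subgroup G K \<Longrightarrow> x \<in> K \<Longrightarrow> y \<in> K \<Longrightarrow> x - y \<in> K"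
  unfolding add_subgroup_def by (metis diff_conv_add_uminus)

lemma add_subgroup_subset: "add_subgroup G K \<Longrightarrow> K \<subseteq> G"
  unfolding add_subgroup_def by blast

lemma add_subgroup_of_subset:
  "add_subgroup G K \<Longrightarrow> K \<subseteq> G' \<Longrightarrow> add_subgroup G' K"
  unfolding add_subgroup_def by blast

lemma pure_subgroupD:
  assumes "pure_subgroup G K"
  shows "add_subgroup G K" and "K \<subseteq> G" and "n > 0 \<Longrightarrow> nmul n ` K = K \<inter> nmul n ` G"
  using assms add_subgroup_subset unfolding pure_subgroup_def by blast+

lemma nmul_inj_on_torsion_free:
  assumes "torsion_free G" "add_subgroup UNIV G" "x \<in> G" "y \<in> G" "n > 0"
    and "nmul n x = nmul n y"
  shows "x = y"
proof -
  have "nmul n (x - y) = 0"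
    using assms(6) by (simp add: nmul_diff)
  then show ?thesis
    using assms(1,5) add_subgroup_diff[OF assms(2-4)] unfolding torsion_free_def by auto
qed

lemma pure_subgroup_trans:
  assumes "pure_subgroup G H" "pure_subgroup H K"
  shows "pure_subgroup G K"
  unfolding pure_subgroup_def
proof (intro conjI allI impI)
  have KH: "K \<subseteq> H" and HG: "H \<subseteq> G"
    using pure_subgroupD(2) assms by blast+
  show "add_subgroup G K"
    using add_subgroup_of_subset[OF pure_subgroupD(1)[OF assms(2)]] KH HG by blast
  fix n :: nat assume "n > 0"
  have "nmul n ` K = K \<inter> (H \<inter> nmul n ` G)"
    using pure_subgroupD(3)[OF assms(2) \<open>n > 0\<close>] pure_subgroupD(3)[OF assms(1) \<open>n > 0\<close>]
    by simp
  then show "nmul n ` K = K \<inter> nmul n ` G"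
    using KH by blast
qed

lemma pure_subgroup_restrict:
  assumes "pure_subgroup G K" "K \<subseteq> H" "H \<subseteq> G"
  shows "pure_subgroup H K"
  unfolding pure_subgroup_def
proof (intro conjI allI impI)
  show "add_subgroup H K"
    using add_subgroup_of_subset[OF pure_subgroupD(1)[OF assms(1)] assms(2)] .
  fix n :: nat assume "n > 0"
  have "nmul n ` K \<subseteq> nmul n ` H" "nmul n ` H \<subseteq> nmul n ` G"
    using assms(2,3) by (simp_all add: image_mono)
  then show "nmul n ` K = K \<inter> nmul n ` H"
    using pure_subgroupD(3)[OF assms(1) \<open>n > 0\<close>] by blast
qed

lemma pure_subgroup_Int:
  assumes tf: "torsion_free G" "add_subgroup UNIV G"
    and K: "pure_subgroup G K" and H: "pure_subgroup G H"
  shows "pure_subgroup G (K \<inter> H)"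
  unfolding pure_subgroup_def
proof (intro conjI allI impI)
  show "add_subgroup G (K \<inter> H)"
    using pure_subgroupD(1)[OF K] pure_subgroupD(1)[OF H] unfolding add_subgroup_def by blast
  fix n :: nat assume n: "n > 0"
  have nK: "nmul n ` K = K \<inter> nmul n ` G" and nH: "nmul n ` H = H \<inter> nmul n ` G"
    using pure_subgroupD(3) K H n by blast+
  show "nmul n ` (K \<inter> H) = (K \<inter> H) \<inter> nmul n ` G"
  proof
    show "nmul n ` (K \<inter> H) \<subseteq> (K \<inter> H) \<inter> nmul n ` G"
      using nK nH by blast
    show "(K \<inter> H) \<inter> nmul n ` G \<subseteq> nmul n ` (K \<inter> H)"
    proof
      fix y assume y: "y \<in> (K \<inter> H) \<inter> nmul n ` G"
      obtain k where k: "k \<in> K" "y = nmul n k"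
        using y nK by blast
      obtain h where h: "h \<in> H" "y = nmul n h"
        using y nH by blast
      have "k \<in> G" "h \<in> G"
        using k(1) h(1) pure_subgroupD(2)[OF K] pure_subgroupD(2)[OF H] by blast+
      then have "k = h"
        using nmul_inj_on_torsion_free[OF tf _ _ n] k(2) h(2) by simp
      then show "y \<in> nmul n ` (K \<inter> H)"
        using k h by blast
    qed
  qed
qed

lemma op_part_open_pure_subgroup:
  assumes tf: "torsion_free G" "add_subgroup UNIV G"
    and H: "pure_subgroup G H" "openin (top_of_set G) H"
  shows "op_part G = op_part H"
proof
  note HG = pure_subgroupD(2)[OF H(1)]
  have "op_part H \<subseteq> K" if K: "pure_subgroup G K" "openin (top_of_set G) K" for K
  proof -
    have "pure_subgroup H (K \<inter> H)"
      using pure_subgroup_restrict[OF pure_subgroup_Int[OF tf K(1) H(1)]] HG by blast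
    moreover have "openin (top_of_set H) (K \<inter> H)"
      using openin_subtopology_Int[OF K(2), of H] HG
      by (simp add: subtopology_subtopology Int_absorb1)
    ultimately show ?thesis
      unfolding op_part_def by blast
  qed
  then show "op_part H \<subseteq> op_part G"
    unfolding op_part_def[of G] by blast
  have "pure_subgroup G K \<and> openin (top_of_set G) K"
    if "pure_subgroup H K" "openin (top_of_set H) K" for K
    using pure_subgroup_trans[OF H(1) that(1)] openin_trans[OF that(2) H(2)] by blast
  then show "op_part G \<subseteq> op_part H"
    unfolding op_part_def by blast
qed

theorem lemma7:
  fixes H :: "'a::{ab_group_add, t2_space} set"
  assumes "LCA_type TYPE('a)"
    and "torsion_free (UNIV :: 'a set)"
    and "pure_subgroup UNIV H"
    and "open H"
  shows "op_part (UNIV :: 'a set) = op_part H"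
proof (rule op_part_open_pure_subgroup)
  show "add_subgroup UNIV (UNIV :: 'a set)"
    unfolding add_subgroup_def by blast
qed (use assms in simp_all)

end
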